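(* Let $\Sigma$ be a finite alphabet and let $\mathbf w$ be a right-infinite word over $\Sigma$. Suppose there is a positive number $\kappa$ such that for each integer $b\ge1$ there is an integer $n=n(b)\ge 1$ with $L_{\mathbf w}(bn)\le\kappa$. Then $\#\mathrm{Per}(\mathbf w)\le\kappa$. In particular, if $L_{\mathbf w}$ is uniformly bounded, then $\mathrm{Per}(\mathbf w)$ is finite.
   Context: $\mathrm{Fac}(\mathbf u)$ denotes the set of finite factors (contiguous blocks) of a right-infinite word $\mathbf u$. Two words are cyclically equivalent if each is a cyclic shift of the other; $[v]_C$ is the class of $v$. $L_{\mathbf w}(n)=\#\{[v]_C : |v|=n,\ [v]_C\subseteq \mathrm{Fac}(\mathbf w)\}$. Call two right-infinite words equivalent ($\sim$) if they have the same set of finite factors. $\mathrm{Per}(\mathbf w)$ is the set of $\sim$-equivalence classes of right-infinite periodic words $v^\omega=vvv\cdots$ ($v$ nonempty) with $\mathrm{Fac}(v^\omega)\subseteq\mathrm{Fac}(\mathbf w)$. *)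

theory Defs
  imports Complex_Main
begin

definition Fac :: "(nat \<Rightarrow> 'a) \<Rightarrow> 'a list set" where
  "Fac u = {v. \<exists>i. v = map u [i..<i + length v]}"

definition cyc_class :: "'a list \<Rightarrow> 'a list set" where
  "cyc_class v = {rotate k v | k. True}"

definition L :: "(nat \<Rightarrow> 'a) \<Rightarrow> nat \<Rightarrow> nat" where
  "L w n = card {cyc_class v | v. length v = n \<and> cyc_class v \<subseteq> Fac w}"

definition omega :: "'a list \<Rightarrow> (nat \<Rightarrow> 'a)" where
  "omega v = (\<lambda>i. v ! (i mod length v))"

definition fac_equiv_class :: "(nat \<Rightarrow> 'a) \<Rightarrow> (nat \<Rightarrow> 'a) set" where
  "fac_equiv_class u = {u'. Fac u' = Fac u}"

definition Per :: "(nat \<Rightarrow> 'a) \<Rightarrow> (nat \<Rightarrow> 'a) set set" where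
  "Per w = {fac_equiv_class (omega v) | v. v \<noteq> [] \<and> Fac (omega v) \<subseteq> Fac w}"

end

theory Submission
  imports Defs
begin

(* Let [v_1^omega], ..., [v_m^omega] be distinct classes in Per w and let b be a common
   multiple of the periods |v_i|. For every n >= 1 the length-bn prefixes of the v_i^omega
   have their whole cyclic class among the factors of w, and these m cyclic classes are
   pairwise different: if two prefixes were cyclic shifts of each other, one periodic word
   would be a shift of the other and so would have the same factors. Hence m <= L_w(bn),
   and the hypothesis bounds the size of every finite subset of Per w by kappa. *)

lemma omega_mod_eq:
  assumes "v \<noteq> []" "length v dvd N"
  shows "omega v (t mod N) = omega v t"
  using assms by (simp add: omega_def mod_mod_cancel)

lemma Fac_shift_periodic:
  assumes per: "\<And>t. u (t mod N) = u t" and "N > 0"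
  shows "Fac (\<lambda>t. u (t + k)) = Fac u"
proof
  show "Fac (\<lambda>t. u (t + k)) \<subseteq> Fac u"
  proof
    fix x assume "x \<in> Fac (\<lambda>t. u (t + k))"
    then obtain i where x: "x = map (\<lambda>t. u (t + k)) [i..<i + length x]"
      by (auto simp: Fac_def)
    have "x = map u [i + k..<i + k + length x]"
      by (rule nth_equalityI) (subst x, simp add: algebra_simps)+
    then show "x \<in> Fac u" unfolding Fac_def by blast
  qed
next
  show "Fac u \<subseteq> Fac (\<lambda>t. u (t + k))"
  proof
    fix x assume "x \<in> Fac u"
    then obtain i where x: "x = map u [i..<i + length x]"
      by (auto simp: Fac_def)
    \<comment> \<open>Going through i + N k instead of i avoids truncated subtraction when k > i.\<close>
    define i' where "i' = i + N * k - k"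
    have "k \<le> N * k" using \<open>N > 0\<close> by simp
    have "x = map (\<lambda>t. u (t + k)) [i'..<i' + length x]"
    proof (rule nth_equalityI)
      fix j assume j: "j < length x"
      have "x ! j = u (i + j)" using j by (subst x) simp
      also have "\<dots> = u (i + j + N * k)" by (metis per mod_mult_self1 mult.commute)
      also have "i + j + N * k = i' + j + k" using \<open>k \<le> N * k\<close> unfolding i'_def by linarith
      finally show "x ! j = map (\<lambda>t. u (t + k)) [i'..<i' + length x] ! j" using j by simp
    qed simp
    then show "x \<in> Fac (\<lambda>t. u (t + k))" unfolding Fac_def by blast
  qed
qed

lemma rotate_map_periodic:
  assumes "\<And>t. u (t mod N) = u t"
  shows "rotate k (map u [0..<N]) = map u [k..<k + N]"
  using assms by (intro nth_equalityI) (simp_all add: nth_rotate)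

lemma cyc_class_prefix_subset_Fac:
  assumes "\<And>t. u (t mod N) = u t"
  shows "cyc_class (map u [0..<N]) \<subseteq> Fac u"
  using rotate_map_periodic[of u N, OF assms] unfolding cyc_class_def Fac_def by fastforce

lemma Fac_eq_if_prefix_in_cyc_class:
  assumes per_u: "\<And>t. u (t mod N) = u t" and per_u': "\<And>t. u' (t mod N) = u' t"
    and "N > 0" and prefix: "map u' [0..<N] \<in> cyc_class (map u [0..<N])"
  shows "Fac u' = Fac u"
proof -
  obtain k where k: "map u' [0..<N] = map u [k..<k + N]"
    using prefix rotate_map_periodic[of u N, OF per_u] unfolding cyc_class_def by auto
  have "u' t = u (t + k)" for t
  proof -
    have "u' t = map u' [0..<N] ! (t mod N)"
      using \<open>N > 0\<close> per_u' by simp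
    also have "\<dots> = u ((k + t mod N) mod N)"
      using \<open>N > 0\<close> per_u by (subst k) simp
    also have "\<dots> = u (t + k)"
      using per_u by (metis add.commute mod_add_right_eq)
    finally show ?thesis .
  qed
  then have "u' = (\<lambda>t. u (t + k))" by blast
  then show ?thesis using Fac_shift_periodic[of u N, OF per_u \<open>N > 0\<close>] by simp
qed

lemma finite_cyc_classes_length:
  "finite {cyc_class v | v :: 'a::finite list. length v = N \<and> P v}"
proof -
  have "finite {v :: 'a list. set v \<subseteq> UNIV \<and> length v = N}"
    by (rule finite_lists_length_eq) simp
  then have "finite (cyc_class ` {v :: 'a list. set v \<subseteq> UNIV \<and> length v = N})"
    by blast
  then show ?thesis by (rule finite_subset[rotated]) auto
qed

lemma card_subset_Per_le_L:
  fixes w :: "nat \<Rightarrow> 'a::finite"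
  assumes "finite S" "S \<subseteq> Per w"
  obtains b where "b \<ge> 1" "\<And>n. n \<ge> 1 \<Longrightarrow> card S \<le> L w (b * n)"
proof -
  obtain f where f: "\<And>P. P \<in> S \<Longrightarrow>
      P = fac_equiv_class (omega (f P)) \<and> f P \<noteq> [] \<and> Fac (omega (f P)) \<subseteq> Fac w"
  proof -
    have "\<forall>P\<in>S. \<exists>v. P = fac_equiv_class (omega v) \<and> v \<noteq> [] \<and> Fac (omega v) \<subseteq> Fac w"
      using assms(2) unfolding Per_def by blast
    then show ?thesis using that by metis
  qed
  define b where "b = (\<Prod>P\<in>S. length (f P))"
  have "b \<ge> 1"
    unfolding b_def using f by (simp add: Suc_le_eq prod_pos)
  moreover have "card S \<le> L w (b * n)" if "n \<ge> 1" for n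
  proof -
    define N where "N = b * n"
    have "N > 0" using \<open>b \<ge> 1\<close> \<open>n \<ge> 1\<close> unfolding N_def by simp
    have per: "omega (f P) (t mod N) = omega (f P) t" if "P \<in> S" for P t
    proof (rule omega_mod_eq)
      show "length (f P) dvd N"
        unfolding N_def b_def using \<open>finite S\<close> that by (intro dvd_mult2 dvd_prod_eqI) simp_all
    qed (use f that in blast)
    define g where "g P = cyc_class (map (omega (f P)) [0..<N])" for P
    define T where "T = {cyc_class v | v. length v = N \<and> cyc_class v \<subseteq> Fac w}"
    have "g ` S \<subseteq> T"
      unfolding g_def T_def
      using cyc_class_prefix_subset_Fac[of "omega (f _)" N, OF per] f by fastforce
    moreover have "inj_on g S"
    proof (rule inj_onI)
      fix P Q assume "P \<in> S" "Q \<in> S" "g P = g Q"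
      have "map (omega (f Q)) [0..<N] \<in> g Q"
        unfolding g_def cyc_class_def by (metis (mono_tags) mem_Collect_eq rotate0 id_apply)
      then have "map (omega (f Q)) [0..<N] \<in> g P" using \<open>g P = g Q\<close> by simp
      then have "Fac (omega (f Q)) = Fac (omega (f P))"
        unfolding g_def
        by (rule Fac_eq_if_prefix_in_cyc_class[of "omega (f P)" N "omega (f Q)",
              OF per[OF \<open>P \<in> S\<close>] per[OF \<open>Q \<in> S\<close>] \<open>N > 0\<close>])
      then show "P = Q" using f[OF \<open>P \<in> S\<close>] f[OF \<open>Q \<in> S\<close>] unfolding fac_equiv_class_def by simp
    qed
    moreover have "finite T" unfolding T_def by (rule finite_cyc_classes_length)
    ultimately have "card S \<le> card T" by (metis card_image card_mono)
    then show ?thesis unfolding L_def T_def N_def .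
  qed
  ultimately show ?thesis by (rule that)
qed

lemma finite_Per_card_le:
  fixes w :: "nat \<Rightarrow> 'a::finite" and \<kappa> :: real
  assumes bounded: "\<forall>b::nat\<ge>1. \<exists>n::nat\<ge>1. real (L w (b * n)) \<le> \<kappa>"
  shows "finite (Per w) \<and> real (card (Per w)) \<le> \<kappa>"
proof -
  have card_le: "real (card S) \<le> \<kappa>" if S: "finite S" "S \<subseteq> Per w" for S
  proof -
    obtain b where "b \<ge> 1" and b: "\<And>n. n \<ge> 1 \<Longrightarrow> card S \<le> L w (b * n)"
      using card_subset_Per_le_L[OF S] by blast
    then obtain n where "n \<ge> 1" "real (L w (b * n)) \<le> \<kappa>" using bounded by blast
    then show ?thesis using b[of n] by linarith
  qed
  have "finite (Per w)"
  proof (rule ccontr)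
    assume "infinite (Per w)"
    then obtain S where "finite S" "S \<subseteq> Per w" "card S = nat \<lceil>\<kappa>\<rceil> + 1"
      by (meson infinite_arbitrarily_large)
    then have "real (nat \<lceil>\<kappa>\<rceil> + 1) \<le> \<kappa>" using card_le by metis
    then show False by linarith
  qed
  then show ?thesis using card_le by simp
qed

theorem mainTheorem6:
  fixes w :: "nat \<Rightarrow> 'a::finite"
  shows "(\<forall>\<kappa>::real. \<kappa> > 0 \<and> (\<forall>b::nat\<ge>1. \<exists>n::nat\<ge>1. real (L w (b * n)) \<le> \<kappa>)
            \<longrightarrow> finite (Per w) \<and> real (card (Per w)) \<le> \<kappa>)
       \<and> ((\<exists>C::nat. \<forall>n. L w n \<le> C) \<longrightarrow> finite (Per w))"
proof (rule conjI; intro allI impI)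
  fix \<kappa> :: real
  assume "\<kappa> > 0 \<and> (\<forall>b::nat\<ge>1. \<exists>n::nat\<ge>1. real (L w (b * n)) \<le> \<kappa>)"
  then show "finite (Per w) \<and> real (card (Per w)) \<le> \<kappa>"
    using finite_Per_card_le by blast
next
  assume "\<exists>C::nat. \<forall>n. L w n \<le> C"
  then obtain C where "\<forall>n. L w n \<le> C" by blast
  then have "\<forall>b::nat\<ge>1. \<exists>n::nat\<ge>1. real (L w (b * n)) \<le> real C" by auto
  then show "finite (Per w)" using finite_Per_card_le by blast
qed

end
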